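(* Let $G=(V,E)$ be a finite simple graph whose vertices operate independently, vertex $v$ with probability $p_v$, and let $q_v=1-p_v$, $\mathbf{p}=(p_v)_{v\in V}\in[0,1]^V$. Then \[ \operatorname{DRel}(G,\mathbf{p})=\sum_{J\subseteq V}(-1)^{|J|}\prod_{v\in N_G[J]}q_v. \] Moreover, if $G$ has no isolated vertices, then for any linear ordering of $V$ and any set $\mathscr{X}$ of broken neighbourhoods of $G$, \[ \operatorname{DRel}(G,\mathbf{p})=\sum_{\substack{J\subseteq V\\ J\not\supseteq X\ \forall X\in\mathscr{X}}}(-1)^{|J|}\prod_{v\in N_G[J]}q_v. \]
   Context: $\operatorname{DRel}(G,\mathbf{p})$ is the probability that the set of operating vertices is a dominating set of $G$ (every vertex not in the set is adjacent to a vertex in it); edges never fail. $N_G[J]$ is the closed neighbourhood of $J$ (vertices in $J$ or adjacent to a vertex of $J$), $N_G[v]=N_G[\{v\}]$. Given a linear ordering of $V$, a broken neighbourhood of $G$ is a set $N_G[v]\setminus\{v\}$ for a vertex $v$ with $v=\max N_G[v]$. *)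

theory Defs
  imports Complex_Main
begin

definition simple_graph :: "'a set \<Rightarrow> ('a \<times> 'a) set \<Rightarrow> bool" where
  "simple_graph V E \<longleftrightarrow> finite V \<and> E \<subseteq> V \<times> V \<and> sym E \<and> irrefl E"

definition closed_nbhd :: "'a set \<Rightarrow> ('a \<times> 'a) set \<Rightarrow> 'a set \<Rightarrow> 'a set" where
  "closed_nbhd V E J = {u \<in> V. u \<in> J \<or> (\<exists>w\<in>J. (w, u) \<in> E)}"

definition dominating_set :: "'a set \<Rightarrow> ('a \<times> 'a) set \<Rightarrow> 'a set \<Rightarrow> bool" where
  "dominating_set V E S \<longleftrightarrow> S \<subseteq> V \<and> (\<forall>v\<in>V - S. \<exists>u\<in>S. (u, v) \<in> E)"

definition DRel :: "'a set \<Rightarrow> ('a \<times> 'a) set \<Rightarrow> ('a \<Rightarrow> real) \<Rightarrow> real" where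
  "DRel V E p = (\<Sum>S | S \<subseteq> V \<and> dominating_set V E S.
      (\<Prod>v\<in>S. p v) * (\<Prod>v\<in>V - S. 1 - p v))"

definition no_isolated :: "'a set \<Rightarrow> ('a \<times> 'a) set \<Rightarrow> bool" where
  "no_isolated V E \<longleftrightarrow> (\<forall>v\<in>V. \<exists>u. (v, u) \<in> E)"

text \<open>Broken neighbourhoods w.r.t. a linear order ord on V (ord is the
  non-strict order relation: (u,v) \<in> ord means u \<le> v).\<close>
definition broken_nbhd :: "'a set \<Rightarrow> ('a \<times> 'a) set \<Rightarrow> ('a \<times> 'a) set \<Rightarrow> 'a set \<Rightarrow> bool" where
  "broken_nbhd V E ord X \<longleftrightarrow>
     (\<exists>v\<in>V. (\<forall>u\<in>closed_nbhd V E {v}. (u, v) \<in> ord) \<and> X = closed_nbhd V E {v} - {v})"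

end

theory Submission
  imports Defs
begin

text \<open>Expanding \<open>\<Prod>v\<in>N[J]. q v\<close> as the probability that every vertex of \<open>N[J]\<close> fails and
  swapping the two sums, an operating set \<open>S\<close> contributes its probability times
  \<open>\<Sum>J\<subseteq>U. (-1)^|J|\<close>, where \<open>U\<close> is the set of vertices not dominated by \<open>S\<close>; this inner sum
  vanishes unless \<open>U = {}\<close>, i.e. unless \<open>S\<close> is dominating.

  For the second formula, let \<open>X = N[v] - {v}\<close> be a broken neighbourhood, nonempty as \<open>v\<close> is
  not isolated. If \<open>X \<subseteq> J\<close> then \<open>v\<close> is dominated by \<open>J\<close>, so toggling \<open>v\<close> in \<open>J\<close> keeps \<open>N[J]\<close>
  and flips the sign: the terms with \<open>J \<supseteq> X\<close> cancel. Since \<open>v\<close> is the maximum of \<open>N[v]\<close>, it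
  lies in no broken neighbourhood, so the toggling respects the remaining constraints and the
  broken neighbourhoods can be excluded one at a time.\<close>

lemma sum_Pow_minus_one_power_card:
  assumes "finite U"
  shows "(\<Sum>J\<in>Pow U. (-1::'a::comm_ring_1) ^ card J) = (if U = {} then 1 else 0)"
proof -
  have "(\<Prod>x\<in>U. (1::'a) - 1) = (\<Sum>J\<in>Pow U. (-1) ^ card J * (\<Prod>x\<in>J. 1) * (\<Prod>x\<in>U - J. 1))"
    by (rule prod_diff_conv_sum[OF assms])
  then show ?thesis
    using assms by (cases "U = {}") (auto simp: power_0_left card_eq_0_iff)
qed

lemma prod_one_minus_eq_sum_Pow:
  fixes p :: "'a \<Rightarrow> 'b::comm_ring_1"
  assumes "finite V" "A \<subseteq> V"
  shows "(\<Prod>v\<in>A. 1 - p v) = (\<Sum>S\<in>Pow (V - A). (\<Prod>v\<in>S. p v) * (\<Prod>v\<in>V - S. 1 - p v))"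
proof -
  have "(\<Prod>v\<in>A. 1 - p v) = (\<Prod>v\<in>V - A. p v + (1 - p v)) * (\<Prod>v\<in>A. 1 - p v)"
    by simp
  also have "\<dots> = (\<Sum>S\<in>Pow (V - A). (\<Prod>v\<in>S. p v) * (\<Prod>v\<in>V - A - S. 1 - p v) * (\<Prod>v\<in>A. 1 - p v))"
    using assms by (simp only: prod_add[of "V - A"] sum_distrib_right finite_Diff)
  also have "\<dots> = (\<Sum>S\<in>Pow (V - A). (\<Prod>v\<in>S. p v) * (\<Prod>v\<in>V - S. 1 - p v))"
  proof (rule sum.cong[OF refl])
    fix S assume "S \<in> Pow (V - A)"
    then have "V - S = (V - A - S) \<union> A" and "(V - A - S) \<inter> A = {}"
      using assms by auto
    then have "(\<Prod>v\<in>V - S. 1 - p v) = (\<Prod>v\<in>V - A - S. 1 - p v) * (\<Prod>v\<in>A. 1 - p v)"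
      using assms by (metis finite_Diff finite_subset prod.union_disjoint)
    then show "(\<Prod>v\<in>S. p v) * (\<Prod>v\<in>V - A - S. 1 - p v) * (\<Prod>v\<in>A. 1 - p v)
        = (\<Prod>v\<in>S. p v) * (\<Prod>v\<in>V - S. 1 - p v)"
      by (simp add: mult.assoc)
  qed
  finally show ?thesis .
qed

definition undominated :: "'a set \<Rightarrow> ('a \<times> 'a) set \<Rightarrow> 'a set \<Rightarrow> 'a set" where
  "undominated V E S = {v \<in> V. S \<inter> closed_nbhd V E {v} = {}}"

lemma undominated_subset: "undominated V E S \<subseteq> V"
  unfolding undominated_def by auto

lemma disjoint_closed_nbhd_iff_subset_undominated:
  assumes "J \<subseteq> V"
  shows "S \<inter> closed_nbhd V E J = {} \<longleftrightarrow> J \<subseteq> undominated V E S"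
  using assms unfolding undominated_def closed_nbhd_def by auto

lemma undominated_eq_empty_iff_dominating_set:
  assumes "sym E" "S \<subseteq> V"
  shows "undominated V E S = {} \<longleftrightarrow> dominating_set V E S"
  using assms unfolding undominated_def closed_nbhd_def dominating_set_def sym_def by blast

lemma DRel_eq_alternating_sum:
  assumes "simple_graph V E"
  shows "DRel V E p = (\<Sum>J | J \<subseteq> V. (-1) ^ card J * (\<Prod>v\<in>closed_nbhd V E J. 1 - p v))"
proof -
  have fin: "finite V" and "sym E"
    using assms unfolding simple_graph_def by auto
  define w where "w S = (\<Prod>v\<in>S. p v) * (\<Prod>v\<in>V - S. 1 - p v)" for S
  define t where "t J S = (if S \<inter> closed_nbhd V E J = {} then (-1) ^ card J * w S else 0)" for J S
  have PowV: "{J. J \<subseteq> V} = Pow V"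
    by auto
  have "(-1) ^ card J * (\<Prod>v\<in>closed_nbhd V E J. 1 - p v) = (\<Sum>S\<in>Pow V. t J S)" for J
  proof -
    have "Pow (V - closed_nbhd V E J) = {S \<in> Pow V. S \<inter> closed_nbhd V E J = {}}"
      by auto
    moreover have "closed_nbhd V E J \<subseteq> V"
      unfolding closed_nbhd_def by auto
    ultimately have "(\<Prod>v\<in>closed_nbhd V E J. 1 - p v)
        = (\<Sum>S\<in>{S \<in> Pow V. S \<inter> closed_nbhd V E J = {}}. w S)"
      using fin unfolding w_def by (simp only: prod_one_minus_eq_sum_Pow)
    also have "\<dots> = (\<Sum>S\<in>Pow V. if S \<inter> closed_nbhd V E J = {} then w S else 0)"
      using fin by (simp only: sum.inter_filter finite_Pow_iff)
    finally show ?thesis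
      by (simp add: sum_distrib_left t_def if_distrib cong: if_cong)
  qed
  then have "(\<Sum>J | J \<subseteq> V. (-1) ^ card J * (\<Prod>v\<in>closed_nbhd V E J. 1 - p v))
      = (\<Sum>J\<in>Pow V. \<Sum>S\<in>Pow V. t J S)"
    unfolding PowV by simp
  also have "\<dots> = (\<Sum>S\<in>Pow V. \<Sum>J\<in>Pow V. t J S)"
    by (rule sum.swap)
  also have "\<dots> = (\<Sum>S\<in>Pow V. if dominating_set V E S then w S else 0)"
  proof (rule sum.cong[OF refl])
    fix S assume "S \<in> Pow V"
    have "{J \<in> Pow V. S \<inter> closed_nbhd V E J = {}} = Pow (undominated V E S)"
      using undominated_subset[of V E S] disjoint_closed_nbhd_iff_subset_undominated[of _ V S E]
      by (auto 4 3)
    then have "(\<Sum>J\<in>Pow V. t J S) = (\<Sum>J\<in>Pow (undominated V E S). (-1) ^ card J) * w S"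
      using fin unfolding t_def by (simp only: sum.inter_filter[symmetric] finite_Pow_iff sum_distrib_right)
    also have "\<dots> = (if dominating_set V E S then w S else 0)"
      using fin \<open>sym E\<close> \<open>S \<in> Pow V\<close> undominated_subset[of V E S]
      by (simp add: sum_Pow_minus_one_power_card finite_subset undominated_eq_empty_iff_dominating_set)
    finally show "(\<Sum>J\<in>Pow V. t J S) = \<dots>" .
  qed
  also have "\<dots> = DRel V E p"
    using fin unfolding DRel_def w_def by (simp add: sum.inter_filter[symmetric] Pow_def)
  finally show ?thesis ..
qed

lemma Collect_eq_Un_image_insert:
  assumes "\<And>J. v \<notin> J \<Longrightarrow> P (insert v J) \<longleftrightarrow> P J"
  shows "{J. P J} = {J. P J \<and> v \<notin> J} \<union> insert v ` {J. P J \<and> v \<notin> J}"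
proof (intro equalityI subsetI)
  fix J assume "J \<in> {J. P J}"
  then show "J \<in> {J. P J \<and> v \<notin> J} \<union> insert v ` {J. P J \<and> v \<notin> J}"
  proof (cases "v \<in> J")
    case True
    then have "J = insert v (J - {v})" and "P (J - {v})"
      using \<open>J \<in> {J. P J}\<close> assms[of "J - {v}"] by (auto simp: insert_absorb)
    then show ?thesis
      by blast
  qed simp
next
  fix J assume "J \<in> {J. P J \<and> v \<notin> J} \<union> insert v ` {J. P J \<and> v \<notin> J}"
  then show "J \<in> {J. P J}"
    using assms by blast
qed

lemma sum_toggle_eq_zero:
  fixes f :: "'a set \<Rightarrow> 'b::ab_group_add"
  assumes "finite {J. P J}" and "\<And>J. v \<notin> J \<Longrightarrow> P (insert v J) \<longleftrightarrow> P J"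
    and "\<And>J. P J \<Longrightarrow> v \<notin> J \<Longrightarrow> f (insert v J) = - f J"
  shows "(\<Sum>J | P J. f J) = 0"
proof -
  define \<A> where "\<A> = {J. P J \<and> v \<notin> J}"
  have "finite \<A>"
    using assms(1) unfolding \<A>_def by (rule rev_finite_subset) blast
  have "inj_on (insert v) \<A>"
    unfolding \<A>_def by (rule inj_onI) (metis Diff_insert_absorb mem_Collect_eq)
  have "{J. P J} = \<A> \<union> insert v ` \<A>"
    unfolding \<A>_def using assms(2) by (rule Collect_eq_Un_image_insert)
  then have "(\<Sum>J | P J. f J) = sum f (\<A> \<union> insert v ` \<A>)"
    by simp
  also have "\<dots> = sum f \<A> + sum f (insert v ` \<A>)"
    using \<open>finite \<A>\<close> by (intro sum.union_disjoint) (auto simp: \<A>_def)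
  also have "sum f (insert v ` \<A>) = (\<Sum>J\<in>\<A>. - f J)"
    using \<open>inj_on (insert v) \<A>\<close> assms(3) by (simp add: sum.reindex \<A>_def)
  finally show ?thesis
    by (simp add: sum_negf)
qed

lemma closed_nbhd_insert:
  "closed_nbhd V E (insert v J) = closed_nbhd V E {v} \<union> closed_nbhd V E J"
  unfolding closed_nbhd_def by auto

lemma closed_nbhd_insert_eq:
  assumes "sym E" and "v \<in> V" and "J \<subseteq> V"
    and "closed_nbhd V E {v} - {v} \<subseteq> J" and "closed_nbhd V E {v} - {v} \<noteq> {}"
  shows "closed_nbhd V E (insert v J) = closed_nbhd V E J"
proof -
  obtain x where x: "x \<in> closed_nbhd V E {v} - {v}"
    using assms(5) by blast
  then have "(x, v) \<in> E"
    using \<open>sym E\<close> by (auto simp: closed_nbhd_def dest: symD)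
  then have "v \<in> closed_nbhd V E J"
    using x assms(2,4) unfolding closed_nbhd_def by blast
  moreover have "J \<subseteq> closed_nbhd V E J"
    using assms(3) unfolding closed_nbhd_def by blast
  ultimately have "closed_nbhd V E {v} \<subseteq> closed_nbhd V E J"
    using assms(4) by blast
  then show ?thesis
    using closed_nbhd_insert[of V E v J] by blast
qed

lemma sum_supersets_of_broken_nbhd_eq_zero:
  fixes p :: "'a \<Rightarrow> 'b::comm_ring_1"
  assumes "simple_graph V E" and "v \<in> V"
    and X: "X = closed_nbhd V E {v} - {v}" and "X \<noteq> {}"
    and "\<forall>Y\<in>\<Y>. v \<notin> Y"
  shows "(\<Sum>J | J \<subseteq> V \<and> (\<forall>Y\<in>\<Y>. \<not> Y \<subseteq> J) \<and> X \<subseteq> J.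
      (-1) ^ card J * (\<Prod>u\<in>closed_nbhd V E J. 1 - p u)) = 0"
proof (rule sum_toggle_eq_zero)
  have "finite V" and "sym E"
    using assms(1) unfolding simple_graph_def by auto
  then show "finite {J. J \<subseteq> V \<and> (\<forall>Y\<in>\<Y>. \<not> Y \<subseteq> J) \<and> X \<subseteq> J}"
    by (auto intro: rev_finite_subset[of "Pow V"])
  show "insert v J \<subseteq> V \<and> (\<forall>Y\<in>\<Y>. \<not> Y \<subseteq> insert v J) \<and> X \<subseteq> insert v J
      \<longleftrightarrow> J \<subseteq> V \<and> (\<forall>Y\<in>\<Y>. \<not> Y \<subseteq> J) \<and> X \<subseteq> J" if "v \<notin> J" for J
    using assms(2,3,5) by (auto simp: subset_insert)
  fix J assume J: "J \<subseteq> V \<and> (\<forall>Y\<in>\<Y>. \<not> Y \<subseteq> J) \<and> X \<subseteq> J" and "v \<notin> J"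
  then have "closed_nbhd V E (insert v J) = closed_nbhd V E J"
    using closed_nbhd_insert_eq[OF \<open>sym E\<close> \<open>v \<in> V\<close>] assms(3,4) by blast
  moreover have "finite J"
    using J \<open>finite V\<close> finite_subset by auto
  ultimately show "(-1) ^ card (insert v J) * (\<Prod>u\<in>closed_nbhd V E (insert v J). 1 - p u)
      = - ((-1) ^ card J * (\<Prod>u\<in>closed_nbhd V E J. 1 - p u))"
    using \<open>v \<notin> J\<close> by simp
qed

lemma centre_notin_broken_nbhd:
  assumes "sym E" and "antisym ord" and "broken_nbhd V E ord Y"
    and v_max: "\<forall>u\<in>closed_nbhd V E {v}. (u, v) \<in> ord"
  shows "v \<notin> Y"
proof
  assume "v \<in> Y"
  obtain w where w: "w \<in> V" and w_max: "\<forall>u\<in>closed_nbhd V E {w}. (u, w) \<in> ord"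
    and Y: "Y = closed_nbhd V E {w} - {w}"
    using assms(3) unfolding broken_nbhd_def by auto
  have "(w, v) \<in> E" "v \<noteq> w" "v \<in> V"
    using \<open>v \<in> Y\<close> Y by (auto simp: closed_nbhd_def)
  then have "(v, w) \<in> ord" "(w, v) \<in> ord"
    using \<open>v \<in> Y\<close> Y w_max v_max w \<open>sym E\<close> by (auto simp: closed_nbhd_def dest: symD)
  then show False
    using \<open>antisym ord\<close> \<open>v \<noteq> w\<close> by (auto dest: antisymD)
qed

lemma alternating_sum_avoiding_broken_nbhds:
  fixes p :: "'a \<Rightarrow> 'b::comm_ring_1"
  assumes "simple_graph V E" and "no_isolated V E" and "linear_order_on V ord"
    and "finite \<X>" and "\<forall>X\<in>\<X>. broken_nbhd V E ord X"
  shows "(\<Sum>J | J \<subseteq> V \<and> (\<forall>X\<in>\<X>. \<not> X \<subseteq> J). (-1) ^ card J * (\<Prod>v\<in>closed_nbhd V E J. 1 - p v))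
    = (\<Sum>J | J \<subseteq> V. (-1) ^ card J * (\<Prod>v\<in>closed_nbhd V E J. 1 - p v))"
  using assms(4,5)
proof (induction \<X> rule: finite_induct)
  case empty
  then show ?case by simp
next
  case (insert X \<X>)
  have fin: "finite V" and "sym E" and "E \<subseteq> V \<times> V" and "irrefl E"
    using assms(1) unfolding simple_graph_def by auto
  have "antisym ord"
    using assms(3) unfolding linear_order_on_def partial_order_on_def by auto
  define f where "f J = (-1) ^ card J * (\<Prod>u\<in>closed_nbhd V E J. 1 - p u)" for J
  obtain v where "v \<in> V" and v_max: "\<forall>u\<in>closed_nbhd V E {v}. (u, v) \<in> ord"
    and X: "X = closed_nbhd V E {v} - {v}"
    using insert.prems unfolding broken_nbhd_def by auto
  obtain u where "(v, u) \<in> E"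
    using assms(2) \<open>v \<in> V\<close> unfolding no_isolated_def by auto
  then have "u \<in> X"
    using X \<open>E \<subseteq> V \<times> V\<close> \<open>irrefl E\<close> by (auto simp: closed_nbhd_def irrefl_def)
  have "\<forall>Y\<in>\<X>. v \<notin> Y"
    using centre_notin_broken_nbhd[OF \<open>sym E\<close> \<open>antisym ord\<close> _ v_max] insert.prems by auto
  then have supersets: "(\<Sum>J | J \<subseteq> V \<and> (\<forall>Y\<in>\<X>. \<not> Y \<subseteq> J) \<and> X \<subseteq> J. f J) = 0"
    unfolding f_def using sum_supersets_of_broken_nbhd_eq_zero[OF assms(1) \<open>v \<in> V\<close> X] \<open>u \<in> X\<close> by blast
  have partition: "{J. J \<subseteq> V \<and> (\<forall>Y\<in>\<X>. \<not> Y \<subseteq> J)}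
      = {J. J \<subseteq> V \<and> (\<forall>Y\<in>insert X \<X>. \<not> Y \<subseteq> J)} \<union> {J. J \<subseteq> V \<and> (\<forall>Y\<in>\<X>. \<not> Y \<subseteq> J) \<and> X \<subseteq> J}"
    by auto
  have finite_subsets: "finite {J. J \<subseteq> V \<and> Q J}" for Q
    using fin by (auto intro: rev_finite_subset[of "Pow V"])
  have "(\<Sum>J | J \<subseteq> V \<and> (\<forall>Y\<in>\<X>. \<not> Y \<subseteq> J). f J)
      = (\<Sum>J | J \<subseteq> V \<and> (\<forall>Y\<in>insert X \<X>. \<not> Y \<subseteq> J). f J)
        + (\<Sum>J | J \<subseteq> V \<and> (\<forall>Y\<in>\<X>. \<not> Y \<subseteq> J) \<and> X \<subseteq> J. f J)"
    unfolding partition by (rule sum.union_disjoint[OF finite_subsets finite_subsets]) blast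
  then have "(\<Sum>J | J \<subseteq> V \<and> (\<forall>Y\<in>insert X \<X>. \<not> Y \<subseteq> J). f J)
      = (\<Sum>J | J \<subseteq> V \<and> (\<forall>Y\<in>\<X>. \<not> Y \<subseteq> J). f J)"
    by (simp only: supersets add_0_right)
  also have "\<dots> = (\<Sum>J | J \<subseteq> V. f J)"
    unfolding f_def using insert.prems by (intro insert.IH) simp
  finally show ?case
    unfolding f_def .
qed

theorem theorem4:
  fixes V :: "'a set" and E :: "('a \<times> 'a) set" and p :: "'a \<Rightarrow> real"
  assumes "simple_graph V E"
    and "\<forall>v\<in>V. 0 \<le> p v \<and> p v \<le> 1"
  shows "DRel V E p = (\<Sum>J | J \<subseteq> V. (-1) ^ card J * (\<Prod>v\<in>closed_nbhd V E J. 1 - p v))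
    \<and> (no_isolated V E \<longrightarrow>
         (\<forall>(ord :: ('a \<times> 'a) set) (\<X> :: 'a set set).
           linear_order_on V ord \<longrightarrow> (\<forall>X\<in>\<X>. broken_nbhd V E ord X) \<longrightarrow>
           DRel V E p = (\<Sum>J | J \<subseteq> V \<and> (\<forall>X\<in>\<X>. \<not> X \<subseteq> J).
              (-1) ^ card J * (\<Prod>v\<in>closed_nbhd V E J. 1 - p v))))"
proof (intro conjI impI allI)
  show DRel: "DRel V E p = (\<Sum>J | J \<subseteq> V. (-1) ^ card J * (\<Prod>v\<in>closed_nbhd V E J. 1 - p v))"
    using assms(1) by (rule DRel_eq_alternating_sum)
  fix ord :: "('a \<times> 'a) set" and \<X> :: "'a set set"
  assume "no_isolated V E" "linear_order_on V ord" and broken: "\<forall>X\<in>\<X>. broken_nbhd V E ord X"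
  have "\<X> \<subseteq> Pow V"
    using broken unfolding broken_nbhd_def closed_nbhd_def by auto
  then have "finite \<X>"
    using assms(1) unfolding simple_graph_def by (meson finite_Pow_iff finite_subset)
  then show "DRel V E p = (\<Sum>J | J \<subseteq> V \<and> (\<forall>X\<in>\<X>. \<not> X \<subseteq> J).
      (-1) ^ card J * (\<Prod>v\<in>closed_nbhd V E J. 1 - p v))"
    using DRel alternating_sum_avoiding_broken_nbhds[OF assms(1) \<open>no_isolated V E\<close>
        \<open>linear_order_on V ord\<close> _ broken, where p = p] by (simp only:)
qed

end
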